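(* The population size of Global SEMO (with fitness $f(x)=(Cost(x),LP(x))$) on the weighted vertex cover problem is at all times upper bounded by $2\cdot OPT+1$.
   Context: Weighted vertex cover: $G=(V,E)$, $V=\{v_1,\dots,v_n\}$, $w:V\to\mathbb{N}^+$; $OPT$ is the minimum weight of a vertex cover. Search points $x\in\{0,1\}^n$; $Cost(x)=\sum_i w(v_i)x_i$; $G(x)$ is $G$ with selected vertices and edges having a selected endpoint removed; $LP(x)$ is the optimal value of: minimize $\sum_{v_i\in V(x)}w(v_i)y_i$ s.t. $y_i+y_j\ge1$ for edges $\{v_i,v_j\}$ of $G(x)$, $0\le y_i\le1$. $f(x)\le f(y)$ means componentwise $\le$. Global SEMO: start with a uniformly random $x$, $P=\{x\}$; each iteration choose $x\in P$ uniformly at random, create $x'$ by flipping each bit independently with probability $1/n$; if no $y\in P$ has $f(y)\le f(x')$, add $x'$ to $P$ and delete all other $z\in P$ with $f(x')\le f(z)$. *)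

theory Defs
  imports "HOL-Probability.Probability"
begin

text \<open>Vertices are v_0,...,v_{n-1}, represented by indices i < n. A search point is a bit string x, represented as a function nat => bool whose
  values at indices >= n are irrelevant (and are False for every point SEMO generates).\<close>

definition is_graph :: "nat \<Rightarrow> nat set set \<Rightarrow> bool" where
  "is_graph n E \<longleftrightarrow> (\<forall>e\<in>E. \<exists>i j. e = {i, j} \<and> i < n \<and> j < n \<and> i \<noteq> j)"

definition Cost :: "nat \<Rightarrow> (nat \<Rightarrow> nat) \<Rightarrow> (nat \<Rightarrow> bool) \<Rightarrow> nat" where
  "Cost n w x = (\<Sum>i<n. w i * (if x i then 1 else 0))"

definition is_vertex_cover :: "nat \<Rightarrow> nat set set \<Rightarrow> (nat \<Rightarrow> bool) \<Rightarrow> bool" where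
  "is_vertex_cover n E x \<longleftrightarrow> (\<forall>e\<in>E. \<exists>i\<in>e. i < n \<and> x i)"

definition OPT :: "nat \<Rightarrow> nat set set \<Rightarrow> (nat \<Rightarrow> nat) \<Rightarrow> nat" where
  "OPT n E w = (LEAST c. \<exists>x. is_vertex_cover n E x \<and> Cost n w x = c)"

definition rem_vertices :: "nat \<Rightarrow> (nat \<Rightarrow> bool) \<Rightarrow> nat set" where
  "rem_vertices n x = {i. i < n \<and> \<not> x i}"

definition rem_edges :: "nat set set \<Rightarrow> (nat \<Rightarrow> bool) \<Rightarrow> nat set set" where
  "rem_edges E x = {e \<in> E. \<forall>i\<in>e. \<not> x i}"

definition LP :: "nat \<Rightarrow> nat set set \<Rightarrow> (nat \<Rightarrow> nat) \<Rightarrow> (nat \<Rightarrow> bool) \<Rightarrow> real" where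
  "LP n E w x = Inf {(\<Sum>i\<in>rem_vertices n x. real (w i) * y i) | y :: nat \<Rightarrow> real.
       (\<forall>e\<in>rem_edges E x. \<forall>i j. e = {i, j} \<longrightarrow> y i + y j \<ge> 1) \<and>
       (\<forall>i\<in>rem_vertices n x. 0 \<le> y i \<and> y i \<le> 1)}"

definition fit_le :: "nat \<Rightarrow> nat set set \<Rightarrow> (nat \<Rightarrow> nat) \<Rightarrow> (nat \<Rightarrow> bool) \<Rightarrow> (nat \<Rightarrow> bool) \<Rightarrow> bool" where
  "fit_le n E w x y \<longleftrightarrow> real (Cost n w x) \<le> real (Cost n w y) \<and> LP n E w x \<le> LP n E w y"

definition init_pmf :: "nat \<Rightarrow> (nat \<Rightarrow> bool) pmf" where
  "init_pmf n = Pi_pmf {..<n} False (\<lambda>_. bernoulli_pmf (1/2))"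

definition mutate :: "nat \<Rightarrow> (nat \<Rightarrow> bool) \<Rightarrow> (nat \<Rightarrow> bool) pmf" where
  "mutate n x = map_pmf (\<lambda>m i. x i \<noteq> m i) (Pi_pmf {..<n} False (\<lambda>_. bernoulli_pmf (1 / real n)))"

definition semo_step :: "nat \<Rightarrow> nat set set \<Rightarrow> (nat \<Rightarrow> nat) \<Rightarrow> (nat \<Rightarrow> bool) set \<Rightarrow> (nat \<Rightarrow> bool) set pmf" where
  "semo_step n E w P =
     pmf_of_set P \<bind> (\<lambda>x. mutate n x \<bind> (\<lambda>x'. return_pmf
       (if (\<exists>y\<in>P. fit_le n E w y x') then P
        else insert x' {z \<in> P. \<not> fit_le n E w x' z})))"

fun semo_pop :: "nat \<Rightarrow> nat set set \<Rightarrow> (nat \<Rightarrow> nat) \<Rightarrow> nat \<Rightarrow> (nat \<Rightarrow> bool) set pmf" where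
  "semo_pop n E w 0 = map_pmf (\<lambda>x. {x}) (init_pmf n)"
| "semo_pop n E w (Suc t) = semo_pop n E w t \<bind> semo_step n E w"

end

theory Submission
  imports Defs
begin

text \<open>Costs are natural numbers, so two search points with the same LP value are comparable;
  as the members of a SEMO population are pairwise incomparable, their LP values are distinct.
  The vertex cover LP is half-integral: a feasible point with fractional coordinates outside
  {0, 1/2, 1} can be shifted, in the cheaper of two directions, until one more coordinate becomes
  half-integral. Hence LP(x) lies in {0, 1/2, ..., OPT}, a set of 2 OPT + 1 values.\<close>

definition half_integral :: "real \<Rightarrow> bool" where
  "half_integral a \<longleftrightarrow> a = 0 \<or> a = 1/2 \<or> a = 1"

definition vc_lp_feasible :: "nat set \<Rightarrow> nat set set \<Rightarrow> (nat \<Rightarrow> real) \<Rightarrow> bool" where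
  "vc_lp_feasible V Ed y \<longleftrightarrow>
     (\<forall>e\<in>Ed. \<forall>i j. e = {i, j} \<longrightarrow> 1 \<le> y i + y j) \<and> (\<forall>i\<in>V. 0 \<le> y i \<and> y i \<le> 1)"

definition fractional_coords :: "nat set \<Rightarrow> (nat \<Rightarrow> real) \<Rightarrow> nat set" where
  "fractional_coords V y = {i \<in> V. \<not> half_integral (y i)}"

definition shift_direction :: "real \<Rightarrow> real" where
  "shift_direction a = (if 0 < a \<and> a < 1/2 then 1 else if 1/2 < a \<and> a < 1 then -1 else 0)"

definition shift :: "(nat \<Rightarrow> real) \<Rightarrow> real \<Rightarrow> nat \<Rightarrow> real" where
  "shift y t i = y i + t * shift_direction (y i)"

lemma fractional_coords_iff:
  assumes "vc_lp_feasible V Ed y" "i \<in> V"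
  shows "i \<in> fractional_coords V y \<longleftrightarrow> (0 < y i \<and> y i < 1/2) \<or> (1/2 < y i \<and> y i < 1)"
  using assms unfolding fractional_coords_def vc_lp_feasible_def half_integral_def by force

lemma shift_cost:
  "(\<Sum>i\<in>V. w i * shift y t i) = (\<Sum>i\<in>V. w i * y i) + t * (\<Sum>i\<in>V. w i * shift_direction (y i))"
  unfolding shift_def by (simp add: algebra_simps sum.distrib sum_distrib_left)

lemma shift_feasible:
  assumes feas: "vc_lp_feasible V Ed y" and edges: "\<forall>e\<in>Ed. e \<subseteq> V"
    and low: "\<forall>i\<in>V. 0 < y i \<and> y i < 1/2 \<longrightarrow> 0 \<le> y i + t \<and> y i + t \<le> 1/2"
    and high: "\<forall>i\<in>V. 1/2 < y i \<and> y i < 1 \<longrightarrow> 1/2 \<le> y i - t \<and> y i - t \<le> 1"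
  shows "vc_lp_feasible V Ed (shift y t)"
proof -
  have shifted: "(0 < y i \<and> y i < 1/2 \<and> shift y t i = y i + t \<and> 0 \<le> shift y t i)
      \<or> (1/2 < y i \<and> y i < 1 \<and> shift y t i = y i - t \<and> 1/2 \<le> shift y t i)
      \<or> (half_integral (y i) \<and> shift y t i = y i)" if "i \<in> V" for i
    using feas that low high
    unfolding vc_lp_feasible_def shift_def shift_direction_def half_integral_def by force
  have "1 \<le> shift y t i + shift y t j" if "e \<in> Ed" "e = {i, j}" for e i j
  proof -
    have "i \<in> V" "j \<in> V" "1 \<le> y i + y j" using that edges feas unfolding vc_lp_feasible_def by auto
    then show ?thesis using shifted[of i] shifted[of j] unfolding half_integral_def by auto
  qed
  moreover have "0 \<le> shift y t i \<and> shift y t i \<le> 1" if "i \<in> V" for i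
    using shifted[OF that] feas that low high unfolding vc_lp_feasible_def half_integral_def by auto
  ultimately show ?thesis unfolding vc_lp_feasible_def by blast
qed

lemma shift_fractional_coords_subset:
  assumes "vc_lp_feasible V Ed y"
  shows "fractional_coords V (shift y t) \<subseteq> fractional_coords V y"
  using assms unfolding fractional_coords_def vc_lp_feasible_def shift_def shift_direction_def
    half_integral_def by auto

lemma rounding_step:
  assumes fin: "finite V" and edges: "\<forall>e\<in>Ed. e \<subseteq> V" and feas: "vc_lp_feasible V Ed y"
    and frac: "fractional_coords V y \<noteq> {}"
  shows "\<exists>y'. vc_lp_feasible V Ed y' \<and> fractional_coords V y' \<subset> fractional_coords V y
           \<and> (\<Sum>i\<in>V. w i * y' i) \<le> (\<Sum>i\<in>V. w i * y i)"
proof -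
  let ?N = "fractional_coords V y"
  have finN: "finite ?N" using fin unfolding fractional_coords_def by simp
  have N_iff: "i \<in> ?N \<longleftrightarrow> i \<in> V \<and> ((0 < y i \<and> y i < 1/2) \<or> (1/2 < y i \<and> y i < 1))" for i
    using fractional_coords_iff[OF feas] unfolding fractional_coords_def by blast
  txt \<open>Moving every fractional coordinate towards 1/2 (or away from it) by the largest amount
    keeping it in its half of [0,1] makes at least one of them half-integral; the cost is
    linear in the amount, so one of the two directions does not increase it.\<close>
  define ip where "ip = arg_min_on (\<lambda>i. \<bar>y i - 1/2\<bar>) ?N"
  define im where "im = arg_min_on (\<lambda>i. min (y i) (1 - y i)) ?N"
  have ip: "ip \<in> ?N" "\<forall>i\<in>?N. \<bar>y ip - 1/2\<bar> \<le> \<bar>y i - 1/2\<bar>"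
    unfolding ip_def using arg_min_if_finite(1)[OF finN frac]
      arg_min_least[OF finN frac, where f = "\<lambda>i. \<bar>y i - 1/2\<bar>"] by blast+
  have im: "im \<in> ?N" "\<forall>i\<in>?N. min (y im) (1 - y im) \<le> min (y i) (1 - y i)"
    unfolding im_def using arg_min_if_finite(1)[OF finN frac]
      arg_min_least[OF finN frac, where f = "\<lambda>i. min (y i) (1 - y i)"] by blast+
  define tp where "tp = \<bar>y ip - 1/2\<bar>"
  define tm where "tm = min (y im) (1 - y im)"
  have reduces: "fractional_coords V (shift y t) \<subset> ?N"
    if "i0 \<in> ?N" "half_integral (shift y t i0)" for t i0
    using that shift_fractional_coords_subset[OF feas, of t] unfolding fractional_coords_def by blast
  have tp_le: "\<forall>i\<in>V. (0 < y i \<and> y i < 1/2 \<longrightarrow> tp \<le> 1/2 - y i)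
      \<and> (1/2 < y i \<and> y i < 1 \<longrightarrow> tp \<le> y i - 1/2)"
    using ip(2) unfolding tp_def Ball_def N_iff by (auto simp: abs_if)
  have tm_le: "\<forall>i\<in>V. (0 < y i \<and> y i < 1/2 \<longrightarrow> tm \<le> y i)
      \<and> (1/2 < y i \<and> y i < 1 \<longrightarrow> tm \<le> 1 - y i)"
    using im(2) unfolding tm_def Ball_def N_iff by (auto simp: min_def)
  have nonneg: "0 \<le> tp" "0 \<le> tm" using im(1) by (auto simp: N_iff tp_def tm_def)
  have feas_p: "vc_lp_feasible V Ed (shift y tp)"
    using nonneg tp_le by (intro shift_feasible[OF feas edges]) (auto simp: N_iff)
  have feas_m: "vc_lp_feasible V Ed (shift y (- tm))"
    using nonneg tm_le by (intro shift_feasible[OF feas edges]) (auto simp: N_iff)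
  have red_p: "fractional_coords V (shift y tp) \<subset> ?N"
    using ip(1) by (intro reduces) (auto simp: N_iff tp_def shift_def shift_direction_def half_integral_def)
  have red_m: "fractional_coords V (shift y (- tm)) \<subset> ?N"
    using im(1) by (intro reduces) (auto simp: N_iff tm_def shift_def shift_direction_def half_integral_def)
  define d where "d = (\<Sum>i\<in>V. w i * shift_direction (y i))"
  have "tp * d \<le> 0 \<or> - tm * d \<le> 0"
    using nonneg by (cases "d \<le> 0") (auto intro: mult_nonneg_nonpos mult_nonneg_nonneg)
  then show ?thesis
  proof
    assume "tp * d \<le> 0"
    then show ?thesis using feas_p red_p shift_cost[of w y tp V] unfolding d_def
      by (intro exI[of _ "shift y tp"]) auto
  next
    assume "- tm * d \<le> 0"
    then show ?thesis using feas_m red_m shift_cost[of w y "- tm" V] unfolding d_def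
      by (intro exI[of _ "shift y (- tm)"]) auto
  qed
qed

lemma half_integral_rounding:
  assumes fin: "finite V" and edges: "\<forall>e\<in>Ed. e \<subseteq> V" and feas: "vc_lp_feasible V Ed y"
  shows "\<exists>y'. vc_lp_feasible V Ed y' \<and> (\<forall>i\<in>V. half_integral (y' i))
           \<and> (\<Sum>i\<in>V. w i * y' i) \<le> (\<Sum>i\<in>V. w i * y i)"
  using feas
proof (induction "card (fractional_coords V y)" arbitrary: y rule: less_induct)
  case less
  show ?case
  proof (cases "fractional_coords V y = {}")
    case True
    then show ?thesis using less.prems unfolding fractional_coords_def by blast
  next
    case False
    then obtain y' where y': "vc_lp_feasible V Ed y'" "fractional_coords V y' \<subset> fractional_coords V y"
        "(\<Sum>i\<in>V. w i * y' i) \<le> (\<Sum>i\<in>V. w i * y i)"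
      using rounding_step[OF fin edges less.prems] by blast
    have "card (fractional_coords V y') < card (fractional_coords V y)"
      using y'(2) fin by (intro psubset_card_mono) (auto simp: fractional_coords_def)
    then show ?thesis using less.hyps y' by (meson order.trans)
  qed
qed


lemma finite_half_integral_costs:
  assumes "finite V"
  shows "finite {(\<Sum>i\<in>V. w i * y i) | y. \<forall>i\<in>V. half_integral (y i)}"
proof (rule finite_subset)
  show "{(\<Sum>i\<in>V. w i * y i) | y. \<forall>i\<in>V. half_integral (y i)}
      \<subseteq> (\<lambda>f. \<Sum>i\<in>V. w i * f i) ` (V \<rightarrow>\<^sub>E {0, 1/2, 1})"
  proof clarify
    fix y assume "\<forall>i\<in>V. half_integral (y i)"
    then have "restrict y V \<in> V \<rightarrow>\<^sub>E {0, 1/2, 1}" unfolding half_integral_def by auto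
    moreover have "(\<Sum>i\<in>V. w i * y i) = (\<Sum>i\<in>V. w i * restrict y V i)" by simp
    ultimately show "(\<Sum>i\<in>V. w i * y i) \<in> (\<lambda>f. \<Sum>i\<in>V. w i * f i) ` (V \<rightarrow>\<^sub>E {0, 1/2, 1})"
      by blast
  qed
  show "finite ((\<lambda>f. \<Sum>i\<in>V. w i * f i) ` (V \<rightarrow>\<^sub>E {0, 1/2, 1}))"
    using assms by (simp add: finite_PiE)
qed

lemma vc_lp_half_integral_optimum:
  assumes fin: "finite V" and edges: "\<forall>e\<in>Ed. e \<subseteq> V" and feas: "vc_lp_feasible V Ed y0"
  shows "\<exists>y. vc_lp_feasible V Ed y \<and> (\<forall>i\<in>V. half_integral (y i))
           \<and> (\<forall>z. vc_lp_feasible V Ed z \<longrightarrow> (\<Sum>i\<in>V. w i * y i) \<le> (\<Sum>i\<in>V. w i * z i))"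
proof -
  define C where "C = {(\<Sum>i\<in>V. w i * y i) | y. vc_lp_feasible V Ed y \<and> (\<forall>i\<in>V. half_integral (y i))}"
  have "finite C"
    unfolding C_def by (rule finite_subset[OF _ finite_half_integral_costs[OF fin, of w]]) blast
  have rounded: "\<exists>c\<in>C. c \<le> (\<Sum>i\<in>V. w i * z i)" if "vc_lp_feasible V Ed z" for z
    using half_integral_rounding[OF fin edges that, of w] unfolding C_def by blast
  then have "C \<noteq> {}" using feas by blast
  then obtain y where y: "vc_lp_feasible V Ed y" "\<forall>i\<in>V. half_integral (y i)"
      "(\<Sum>i\<in>V. w i * y i) = Min C"
    using Min_in[OF \<open>finite C\<close>] unfolding C_def by auto
  have "Min C \<le> (\<Sum>i\<in>V. w i * z i)" if "vc_lp_feasible V Ed z" for z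
    using rounded[OF that] Min_le[OF \<open>finite C\<close>] by force
  then show ?thesis using y by auto
qed

lemma half_integral_weighted_sum:
  assumes "\<forall>i\<in>V. half_integral (y i)"
  shows "\<exists>k::nat. (\<Sum>i\<in>V. real (w i) * y i) = real k / 2"
proof -
  define k where "k i = (if y i = 0 then 0 else if y i = 1/2 then 1 else 2 :: nat)" for i
  have "(\<Sum>i\<in>V. real (w i) * y i) = (\<Sum>i\<in>V. real (w i * k i) / 2)"
    using assms by (intro sum.cong) (auto simp: k_def half_integral_def)
  also have "\<dots> = real (\<Sum>i\<in>V. w i * k i) / 2" by (simp add: sum_divide_distrib)
  finally show ?thesis by blast
qed

lemma rem_edges_subset_rem_vertices:
  assumes "is_graph n E" "e \<in> rem_edges E x"
  shows "e \<subseteq> rem_vertices n x"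
  using assms unfolding is_graph_def rem_edges_def rem_vertices_def by fastforce

lemma LP_eq_Inf_feasible:
  "LP n E w x = Inf {(\<Sum>i\<in>rem_vertices n x. real (w i) * y i) | y.
     vc_lp_feasible (rem_vertices n x) (rem_edges E x) y}"
  unfolding LP_def vc_lp_feasible_def by (rule refl)

lemma OPT_attained:
  assumes "is_graph n E"
  obtains z where "is_vertex_cover n E z" "Cost n w z = OPT n E w"
proof -
  have "is_vertex_cover n E (\<lambda>_. True)"
    using assms unfolding is_graph_def is_vertex_cover_def by fastforce
  then show ?thesis using that LeastI_ex[of "\<lambda>c. \<exists>x. is_vertex_cover n E x \<and> Cost n w x = c"]
    unfolding OPT_def by blast
qed

lemma vertex_cover_vc_lp_feasible:
  assumes "is_vertex_cover n E z"
  shows "vc_lp_feasible (rem_vertices n x) (rem_edges E x) (\<lambda>i. if z i then 1 else 0)"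
  using assms unfolding vc_lp_feasible_def is_vertex_cover_def rem_edges_def by fastforce

lemma rem_vertices_cost_le_Cost:
  "(\<Sum>i\<in>rem_vertices n x. real (w i) * (if z i then 1 else 0)) \<le> real (Cost n w z)"
proof -
  have "(\<Sum>i\<in>rem_vertices n x. real (w i) * (if z i then 1 else 0))
      \<le> (\<Sum>i<n. real (w i) * (if z i then 1 else 0))"
    by (rule sum_mono2) (auto simp: rem_vertices_def)
  also have "\<dots> = real (Cost n w z)"
    unfolding Cost_def of_nat_sum of_nat_mult by (intro sum.cong) auto
  finally show ?thesis .
qed

lemma LP_half_integral_le_OPT:
  assumes g: "is_graph n E"
  obtains k :: nat where "LP n E w x = real k / 2" "k \<le> 2 * OPT n E w"
proof -
  let ?V = "rem_vertices n x" and ?Ed = "rem_edges E x"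
  let ?cost = "\<lambda>y. \<Sum>i\<in>?V. real (w i) * y i"
  obtain z where z: "is_vertex_cover n E z" "Cost n w z = OPT n E w" using OPT_attained[OF g] .
  have fin: "finite ?V" unfolding rem_vertices_def by simp
  have edges: "\<forall>e\<in>?Ed. e \<subseteq> ?V" using rem_edges_subset_rem_vertices[OF g] by blast
  obtain y where y: "vc_lp_feasible ?V ?Ed y" "\<forall>i\<in>?V. half_integral (y i)"
      "\<forall>y'. vc_lp_feasible ?V ?Ed y' \<longrightarrow> ?cost y \<le> ?cost y'"
    using vc_lp_half_integral_optimum[OF fin edges vertex_cover_vc_lp_feasible[OF z(1)],
        where w = "\<lambda>i. real (w i)"] by blast
  have LP_eq: "LP n E w x = ?cost y"
    unfolding LP_eq_Inf_feasible using y(1,3) by (intro cInf_eq_minimum) auto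
  obtain k :: nat where k: "?cost y = real k / 2"
    using half_integral_weighted_sum[OF y(2)] by blast
  have "?cost y \<le> ?cost (\<lambda>i. if z i then 1 else 0)"
    using y(3) vertex_cover_vc_lp_feasible[OF z(1)] by blast
  also have "\<dots> \<le> real (OPT n E w)" using rem_vertices_cost_le_Cost z(2) by metis
  finally have "k \<le> 2 * OPT n E w" unfolding k by simp
  with LP_eq k that show ?thesis by simp
qed

definition incomparable_population ::
    "nat \<Rightarrow> nat set set \<Rightarrow> (nat \<Rightarrow> nat) \<Rightarrow> (nat \<Rightarrow> bool) set \<Rightarrow> bool" where
  "incomparable_population n E w P \<longleftrightarrow>
     finite P \<and> P \<noteq> {} \<and> (\<forall>a\<in>P. \<forall>b\<in>P. a \<noteq> b \<longrightarrow> \<not> fit_le n E w a b)"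

lemma semo_step_incomparable:
  assumes P: "incomparable_population n E w P" and Q: "Q \<in> set_pmf (semo_step n E w P)"
  shows "incomparable_population n E w Q"
proof -
  have "set_pmf (pmf_of_set P) = P" using P unfolding incomparable_population_def by simp
  then obtain x' where
    "Q = (if \<exists>y\<in>P. fit_le n E w y x' then P else insert x' {z \<in> P. \<not> fit_le n E w x' z})"
    using Q unfolding semo_step_def set_bind_pmf by auto
  then show ?thesis
    using P unfolding incomparable_population_def by (cases "\<exists>y\<in>P. fit_le n E w y x'") auto
qed

lemma semo_pop_incomparable:
  "P \<in> set_pmf (semo_pop n E w t) \<Longrightarrow> incomparable_population n E w P"
proof (induction t arbitrary: P)
  case 0
  then show ?case unfolding incomparable_population_def by auto
next
  case (Suc t)
  then show ?case by (auto simp: set_bind_pmf intro: semo_step_incomparable)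
qed

lemma LP_inj_on_incomparable:
  assumes "incomparable_population n E w P"
  shows "inj_on (LP n E w) P"
proof (rule inj_onI)
  fix a b assume ab: "a \<in> P" "b \<in> P" and LP_eq: "LP n E w a = LP n E w b"
  have "fit_le n E w a b \<or> fit_le n E w b a"
    unfolding fit_le_def LP_eq by (simp add: nat_le_linear)
  then show "a = b" using assms ab unfolding incomparable_population_def by metis
qed

lemma card_incomparable_population_le:
  assumes g: "is_graph n E" and P: "incomparable_population n E w P"
  shows "card P \<le> 2 * OPT n E w + 1"
proof -
  have "LP n E w a \<in> (\<lambda>k. real k / 2) ` {..2 * OPT n E w}" for a
    using LP_half_integral_le_OPT[OF g, of w a] by (metis atMost_iff image_eqI)
  then have "LP n E w ` P \<subseteq> (\<lambda>k. real k / 2) ` {..2 * OPT n E w}" by blast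
  then have "card (LP n E w ` P) \<le> card ((\<lambda>k. real k / 2) ` {..2 * OPT n E w})"
    by (rule card_mono[rotated]) simp
  also have "\<dots> \<le> 2 * OPT n E w + 1" using card_image_le[of "{..2 * OPT n E w}"] by simp
  finally show ?thesis using card_image[OF LP_inj_on_incomparable[OF P]] by simp
qed

theorem lemma3:
  fixes n :: nat and E :: "nat set set" and w :: "nat \<Rightarrow> nat"
  assumes "is_graph n E"
    and "\<forall>i<n. w i > 0"
  shows "\<forall>t. \<forall>P \<in> set_pmf (semo_pop n E w t). card P \<le> 2 * OPT n E w + 1"
  using card_incomparable_population_le[OF assms(1) semo_pop_incomparable] by blast

end
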